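(* If $\{A\}\ \Gamma ; \Delta \vdash \mathcal{C}_1$, and $\mathcal{C}_1 \longrightarrow \mathcal{C}_2$, then there exists some $\mathcal{D}$ such that $[\![\mathcal{C}_1]\!] \longrightarrow^* \mathcal{D}$ with $\mathcal{D} \equiv [\![\mathcal{C}_2]\!]$.
   Context: $\lambda_{\text{ch}}$ is a concurrent fine-grain call-by-value $\lambda$-calculus with asynchronous channels (primitives $\mathsf{fork}$, $\mathsf{give}$, $\mathsf{take}$, $\mathsf{newCh}$; configurations built from parallel composition, name restriction $(\nu a)$, terms and buffers $a(\vec V)$), extended with products, sums, recursive functions and iso-recursive types (hence lists). $\lambda_{\text{act}}$ is the analogous actor calculus (primitives $\mathsf{spawn}$, $\mathsf{send}$, $\mathsf{receive}$, $\mathsf{self}$; configurations built from parallel composition, $(\nu a)$ and actors $\langle a, M, \vec V\rangle$ with name $a$, running term $M$, mailbox $\vec V$). $\longrightarrow$ is configuration reduction (modulo structural congruence $\equiv$: commutativity/associativity of $\parallel$, scope extrusion), $\longrightarrow^*$ its reflexive-transitive closure. $\{A\}\ \Gamma;\Delta \vdash \mathcal{C}$ is the $\lambda_{\text{ch}}$ configuration typing judgement where every channel has the same type $A$. $[\![-]\!]$ is the translation from $\lambda_{\text{ch}}$ into $\lambda_{\text{act}}$ w.r.t. channel type $A$: $[\![\mathsf{Chan}]\!] = \mathsf{ActorRef}([\![A]\!] + \mathsf{ActorRef}([\![A]\!]))$; $\mathsf{give}\,V\,W \mapsto \mathsf{send}\,(\mathsf{inl}\,[\![V]\!])\,[\![W]\!]$;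 $\mathsf{take}\,V \mapsto$ let $selfPid \Leftarrow \mathsf{self}$ in $\mathsf{send}\,(\mathsf{inr}\,selfPid)\,[\![V]\!]$; $\mathsf{receive}$; $\mathsf{fork}\,M \mapsto$ let $x \Leftarrow \mathsf{spawn}\,[\![M]\!]$ in $\mathsf{return}\,()$; $\mathsf{newCh} \mapsto \mathsf{spawn}\,(\mathit{body}\,([\,],[\,]))$, where $\mathit{body}$ is a recursive loop holding a pair (list of buffered values, list of waiting pids): on receiving $\mathsf{inl}\,v$ it appends $v$ to the values, on $\mathsf{inr}\,pid$ it appends $pid$ to the waiting pids, and then calls $\mathit{drain}$, which, if both lists are non-empty, sends the head value to the head pid and removes both. On configurations the translation is homomorphic on $\parallel$ and $\nu$; a term $M$ becomes $(\nu a)\langle a, [\![M]\!], \epsilon\rangle$ for fresh $a$; a buffer $a(\vec V)$ becomes $\langle a, \mathit{body}\,([\![\vec V]\!], [\,]), \epsilon\rangle$ with $[\![\vec V]\!]$ the term-level list of translated values. *)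

theory Defs
  imports Main
begin

type_synonym name = nat

text \<open>Under the judgement {A} every channel has
  the same payload type A, so there is a single channel type TChan (the type Chan of the
  paper). Iso-recursive types use de Bruijn type variables.\<close>

datatype ty = TUnit | TFun ty ty | TChan | TProd ty ty | TSum ty ty | TMu ty | TVar nat

fun tlift :: "nat \<Rightarrow> ty \<Rightarrow> ty" where
  "tlift k TUnit = TUnit"
| "tlift k (TFun S T) = TFun (tlift k S) (tlift k T)"
| "tlift k TChan = TChan"
| "tlift k (TProd S T) = TProd (tlift k S) (tlift k T)"
| "tlift k (TSum S T) = TSum (tlift k S) (tlift k T)"
| "tlift k (TMu T) = TMu (tlift (Suc k) T)"
| "tlift k (TVar i) = (if i < k then TVar i else TVar (Suc i))"

fun tsubst :: "nat \<Rightarrow> ty \<Rightarrow> ty \<Rightarrow> ty" where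
  "tsubst k U TUnit = TUnit"
| "tsubst k U (TFun S T) = TFun (tsubst k U S) (tsubst k U T)"
| "tsubst k U TChan = TChan"
| "tsubst k U (TProd S T) = TProd (tsubst k U S) (tsubst k U T)"
| "tsubst k U (TSum S T) = TSum (tsubst k U S) (tsubst k U T)"
| "tsubst k U (TMu T) = TMu (tsubst (Suc k) (tlift 0 U) T)"
| "tsubst k U (TVar i) = (if i < k then TVar i else if i = k then U else TVar (i - 1))"

definition unfold_mu :: "ty \<Rightarrow> ty" where
  "unfold_mu T = tsubst 0 (TMu T) T"

definition swap_name :: "name \<Rightarrow> name \<Rightarrow> name \<Rightarrow> name" where
  "swap_name a b c = (if c = a then b else if c = b then a else c)"

text \<open>Configurations: parallel composition, name restriction, and a leaf
  (a term or a buffer in lambda-ch; an actor in lambda-act).\<close>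

datatype 'l cfg = Par "'l cfg" "'l cfg" | Nu name "'l cfg" | Leaf 'l

fun cfg_fn :: "('l \<Rightarrow> name set) \<Rightarrow> 'l cfg \<Rightarrow> name set" where
  "cfg_fn f (Par C D) = cfg_fn f C \<union> cfg_fn f D"
| "cfg_fn f (Nu a C) = cfg_fn f C - {a}"
| "cfg_fn f (Leaf l) = f l"

fun cfg_swap :: "(name \<Rightarrow> name \<Rightarrow> 'l \<Rightarrow> 'l) \<Rightarrow> name \<Rightarrow> name \<Rightarrow> 'l cfg \<Rightarrow> 'l cfg" where
  "cfg_swap s a b (Par C D) = Par (cfg_swap s a b C) (cfg_swap s a b D)"
| "cfg_swap s a b (Nu c C) = Nu (swap_name a b c) (cfg_swap s a b C)"
| "cfg_swap s a b (Leaf l) = Leaf (s a b l)"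

text \<open>Structural congruence: equivalence, commutativity and associativity of parallel
  composition, scope extrusion, closure under the contexts  G ::= [] | (nu a) G | G || C,
  together with the standard implicit conventions: exchange of restrictions and
  alpha-conversion of restricted names.\<close>

inductive scong :: "('l \<Rightarrow> name set) \<Rightarrow> (name \<Rightarrow> name \<Rightarrow> 'l \<Rightarrow> 'l) \<Rightarrow> 'l cfg \<Rightarrow> 'l cfg \<Rightarrow> bool"
  for f :: "'l \<Rightarrow> name set" and s :: "name \<Rightarrow> name \<Rightarrow> 'l \<Rightarrow> 'l" where
  sc_refl: "scong f s C C"
| sc_sym: "scong f s C D \<Longrightarrow> scong f s D C"
| sc_trans: "scong f s C D \<Longrightarrow> scong f s D E \<Longrightarrow> scong f s C E"
| sc_comm: "scong f s (Par C D) (Par D C)"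
| sc_assoc: "scong f s (Par C (Par D E)) (Par (Par C D) E)"
| sc_extr: "a \<notin> cfg_fn f C \<Longrightarrow> scong f s (Par C (Nu a D)) (Nu a (Par C D))"
| sc_nu_comm: "scong f s (Nu a (Nu b C)) (Nu b (Nu a C))"
| sc_alpha: "b \<notin> cfg_fn f (Nu a C) \<Longrightarrow> scong f s (Nu a C) (Nu b (cfg_swap s a b C))"
| sc_par: "scong f s C D \<Longrightarrow> scong f s (Par C E) (Par D E)"
| sc_nu: "scong f s C D \<Longrightarrow> scong f s (Nu a C) (Nu a D)"

section \<open>lambda-ch: syntax\<close>

text \<open>Fine-grain call-by-value terms, de Bruijn indices for term variables.
  CLam M binds index 0 in M; CRec M (rec f(x).M) binds x as index 0 and f as index 1;
  CLet M N binds index 0 in N; CLetPair V M (let (x,y) = V in M) binds y as 0 and x as 1;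
  CCase V M N binds index 0 in each branch. Lists are  mu t. 1 + (A * t).\<close>

datatype chv = CVar nat | CName name | CLam cht | CRec cht | CUnit | CPair chv chv
  | CInl chv | CInr chv | CRoll chv
and cht = CApp chv chv | CLet cht cht | CReturn chv | CLetPair chv cht | CCase chv cht cht
  | CUnroll chv | CFork cht | CGive chv chv | CTake chv | CNewCh

primrec chv_lift :: "nat \<Rightarrow> chv \<Rightarrow> chv" and cht_lift :: "nat \<Rightarrow> cht \<Rightarrow> cht" where
  "chv_lift k (CVar i) = (if i < k then CVar i else CVar (Suc i))"
| "chv_lift k (CName a) = CName a"
| "chv_lift k (CLam M) = CLam (cht_lift (Suc k) M)"
| "chv_lift k (CRec M) = CRec (cht_lift (Suc (Suc k)) M)"
| "chv_lift k CUnit = CUnit"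
| "chv_lift k (CPair V W) = CPair (chv_lift k V) (chv_lift k W)"
| "chv_lift k (CInl V) = CInl (chv_lift k V)"
| "chv_lift k (CInr V) = CInr (chv_lift k V)"
| "chv_lift k (CRoll V) = CRoll (chv_lift k V)"
| "cht_lift k (CApp V W) = CApp (chv_lift k V) (chv_lift k W)"
| "cht_lift k (CLet M N) = CLet (cht_lift k M) (cht_lift (Suc k) N)"
| "cht_lift k (CReturn V) = CReturn (chv_lift k V)"
| "cht_lift k (CLetPair V M) = CLetPair (chv_lift k V) (cht_lift (Suc (Suc k)) M)"
| "cht_lift k (CCase V M N) = CCase (chv_lift k V) (cht_lift (Suc k) M) (cht_lift (Suc k) N)"
| "cht_lift k (CUnroll V) = CUnroll (chv_lift k V)"
| "cht_lift k (CFork M) = CFork (cht_lift k M)"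
| "cht_lift k (CGive V W) = CGive (chv_lift k V) (chv_lift k W)"
| "cht_lift k (CTake V) = CTake (chv_lift k V)"
| "cht_lift k CNewCh = CNewCh"

primrec chv_subst :: "nat \<Rightarrow> chv \<Rightarrow> chv \<Rightarrow> chv" and cht_subst :: "nat \<Rightarrow> chv \<Rightarrow> cht \<Rightarrow> cht" where
  "chv_subst k U (CVar i) = (if i < k then CVar i else if i = k then U else CVar (i - 1))"
| "chv_subst k U (CName a) = CName a"
| "chv_subst k U (CLam M) = CLam (cht_subst (Suc k) (chv_lift 0 U) M)"
| "chv_subst k U (CRec M) = CRec (cht_subst (Suc (Suc k)) (chv_lift 0 (chv_lift 0 U)) M)"
| "chv_subst k U CUnit = CUnit"
| "chv_subst k U (CPair V W) = CPair (chv_subst k U V) (chv_subst k U W)"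
| "chv_subst k U (CInl V) = CInl (chv_subst k U V)"
| "chv_subst k U (CInr V) = CInr (chv_subst k U V)"
| "chv_subst k U (CRoll V) = CRoll (chv_subst k U V)"
| "cht_subst k U (CApp V W) = CApp (chv_subst k U V) (chv_subst k U W)"
| "cht_subst k U (CLet M N) = CLet (cht_subst k U M) (cht_subst (Suc k) (chv_lift 0 U) N)"
| "cht_subst k U (CReturn V) = CReturn (chv_subst k U V)"
| "cht_subst k U (CLetPair V M) =
     CLetPair (chv_subst k U V) (cht_subst (Suc (Suc k)) (chv_lift 0 (chv_lift 0 U)) M)"
| "cht_subst k U (CCase V M N) =
     CCase (chv_subst k U V) (cht_subst (Suc k) (chv_lift 0 U) M) (cht_subst (Suc k) (chv_lift 0 U) N)"
| "cht_subst k U (CUnroll V) = CUnroll (chv_subst k U V)"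
| "cht_subst k U (CFork M) = CFork (cht_subst k U M)"
| "cht_subst k U (CGive V W) = CGive (chv_subst k U V) (chv_subst k U W)"
| "cht_subst k U (CTake V) = CTake (chv_subst k U V)"
| "cht_subst k U CNewCh = CNewCh"

primrec chv_fn :: "chv \<Rightarrow> name set" and cht_fn :: "cht \<Rightarrow> name set" where
  "chv_fn (CVar i) = {}"
| "chv_fn (CName a) = {a}"
| "chv_fn (CLam M) = cht_fn M"
| "chv_fn (CRec M) = cht_fn M"
| "chv_fn CUnit = {}"
| "chv_fn (CPair V W) = chv_fn V \<union> chv_fn W"
| "chv_fn (CInl V) = chv_fn V"
| "chv_fn (CInr V) = chv_fn V"
| "chv_fn (CRoll V) = chv_fn V"
| "cht_fn (CApp V W) = chv_fn V \<union> chv_fn W"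
| "cht_fn (CLet M N) = cht_fn M \<union> cht_fn N"
| "cht_fn (CReturn V) = chv_fn V"
| "cht_fn (CLetPair V M) = chv_fn V \<union> cht_fn M"
| "cht_fn (CCase V M N) = chv_fn V \<union> cht_fn M \<union> cht_fn N"
| "cht_fn (CUnroll V) = chv_fn V"
| "cht_fn (CFork M) = cht_fn M"
| "cht_fn (CGive V W) = chv_fn V \<union> chv_fn W"
| "cht_fn (CTake V) = chv_fn V"
| "cht_fn CNewCh = {}"

primrec chv_swap :: "name \<Rightarrow> name \<Rightarrow> chv \<Rightarrow> chv" and cht_swap :: "name \<Rightarrow> name \<Rightarrow> cht \<Rightarrow> cht" where
  "chv_swap a b (CVar i) = CVar i"
| "chv_swap a b (CName c) = CName (swap_name a b c)"
| "chv_swap a b (CLam M) = CLam (cht_swap a b M)"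
| "chv_swap a b (CRec M) = CRec (cht_swap a b M)"
| "chv_swap a b CUnit = CUnit"
| "chv_swap a b (CPair V W) = CPair (chv_swap a b V) (chv_swap a b W)"
| "chv_swap a b (CInl V) = CInl (chv_swap a b V)"
| "chv_swap a b (CInr V) = CInr (chv_swap a b V)"
| "chv_swap a b (CRoll V) = CRoll (chv_swap a b V)"
| "cht_swap a b (CApp V W) = CApp (chv_swap a b V) (chv_swap a b W)"
| "cht_swap a b (CLet M N) = CLet (cht_swap a b M) (cht_swap a b N)"
| "cht_swap a b (CReturn V) = CReturn (chv_swap a b V)"
| "cht_swap a b (CLetPair V M) = CLetPair (chv_swap a b V) (cht_swap a b M)"
| "cht_swap a b (CCase V M N) = CCase (chv_swap a b V) (cht_swap a b M) (cht_swap a b N)"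
| "cht_swap a b (CUnroll V) = CUnroll (chv_swap a b V)"
| "cht_swap a b (CFork M) = CFork (cht_swap a b M)"
| "cht_swap a b (CGive V W) = CGive (chv_swap a b V) (chv_swap a b W)"
| "cht_swap a b (CTake V) = CTake (chv_swap a b V)"
| "cht_swap a b CNewCh = CNewCh"

datatype chctx = CHole | CELet chctx cht

primrec ch_plug :: "chctx \<Rightarrow> cht \<Rightarrow> cht" where
  "ch_plug CHole M = M"
| "ch_plug (CELet E N) M = CLet (ch_plug E M) N"

datatype chleaf = Thread cht | Buf name "chv list"

primrec chleaf_fn :: "chleaf \<Rightarrow> name set" where
  "chleaf_fn (Thread M) = cht_fn M"
| "chleaf_fn (Buf a Vs) = insert a (\<Union>V\<in>set Vs. chv_fn V)"

primrec chleaf_swap :: "name \<Rightarrow> name \<Rightarrow> chleaf \<Rightarrow> chleaf" where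
  "chleaf_swap a b (Thread M) = Thread (cht_swap a b M)"
| "chleaf_swap a b (Buf c Vs) = Buf (swap_name a b c) (map (chv_swap a b) Vs)"

type_synonym chcfg = "chleaf cfg"

abbreviation ch_cong :: "chcfg \<Rightarrow> chcfg \<Rightarrow> bool" where
  "ch_cong \<equiv> scong chleaf_fn chleaf_swap"

section \<open>lambda-ch: typing, with every channel of payload type A\<close>

text \<open>The environment Gamma consists of a set N of names (each of type Chan, since every
  channel has type A) and a list G of types of the de Bruijn term variables.
  The buffer environment Delta is the set of names of buffers, each of payload type A.\<close>

inductive ch_vty :: "ty \<Rightarrow> name set \<Rightarrow> ty list \<Rightarrow> chv \<Rightarrow> ty \<Rightarrow> bool"
  and ch_tty :: "ty \<Rightarrow> name set \<Rightarrow> ty list \<Rightarrow> cht \<Rightarrow> ty \<Rightarrow> bool"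
  for A :: ty where
  tv_var: "i < length G \<Longrightarrow> ch_vty A N G (CVar i) (G ! i)"
| tv_name: "a \<in> N \<Longrightarrow> ch_vty A N G (CName a) TChan"
| tv_lam: "ch_tty A N (T1 # G) M T2 \<Longrightarrow> ch_vty A N G (CLam M) (TFun T1 T2)"
| tv_rec: "ch_tty A N (T1 # TFun T1 T2 # G) M T2 \<Longrightarrow> ch_vty A N G (CRec M) (TFun T1 T2)"
| tv_unit: "ch_vty A N G CUnit TUnit"
| tv_pair: "ch_vty A N G V T1 \<Longrightarrow> ch_vty A N G W T2 \<Longrightarrow> ch_vty A N G (CPair V W) (TProd T1 T2)"
| tv_inl: "ch_vty A N G V T1 \<Longrightarrow> ch_vty A N G (CInl V) (TSum T1 T2)"
| tv_inr: "ch_vty A N G V T2 \<Longrightarrow> ch_vty A N G (CInr V) (TSum T1 T2)"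
| tv_roll: "ch_vty A N G V (unfold_mu T) \<Longrightarrow> ch_vty A N G (CRoll V) (TMu T)"
| tt_app: "ch_vty A N G V (TFun T1 T2) \<Longrightarrow> ch_vty A N G W T1 \<Longrightarrow> ch_tty A N G (CApp V W) T2"
| tt_let: "ch_tty A N G M T1 \<Longrightarrow> ch_tty A N (T1 # G) M' T2 \<Longrightarrow> ch_tty A N G (CLet M M') T2"
| tt_return: "ch_vty A N G V T \<Longrightarrow> ch_tty A N G (CReturn V) T"
| tt_letpair: "ch_vty A N G V (TProd T1 T2) \<Longrightarrow> ch_tty A N (T2 # T1 # G) M T
    \<Longrightarrow> ch_tty A N G (CLetPair V M) T"
| tt_case: "ch_vty A N G V (TSum T1 T2) \<Longrightarrow> ch_tty A N (T1 # G) M T \<Longrightarrow> ch_tty A N (T2 # G) M' T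
    \<Longrightarrow> ch_tty A N G (CCase V M M') T"
| tt_unroll: "ch_vty A N G V (TMu T) \<Longrightarrow> ch_tty A N G (CUnroll V) (unfold_mu T)"
| tt_fork: "ch_tty A N G M TUnit \<Longrightarrow> ch_tty A N G (CFork M) TUnit"
| tt_give: "ch_vty A N G V A \<Longrightarrow> ch_vty A N G W TChan \<Longrightarrow> ch_tty A N G (CGive V W) TUnit"
| tt_take: "ch_vty A N G V TChan \<Longrightarrow> ch_tty A N G (CTake V) A"
| tt_newch: "ch_tty A N G CNewCh TChan"

text \<open>Configuration typing  {A} Gamma; Delta |- C.\<close>
inductive ch_cty :: "ty \<Rightarrow> name set \<Rightarrow> ty list \<Rightarrow> name set \<Rightarrow> chcfg \<Rightarrow> bool"
  for A :: ty where
  tc_par: "ch_cty A N G D1 C1 \<Longrightarrow> ch_cty A N G D2 C2 \<Longrightarrow> D1 \<inter> D2 = {}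
    \<Longrightarrow> ch_cty A N G (D1 \<union> D2) (Par C1 C2)"
| tc_nu: "ch_cty A (insert a N) G (insert a D) C \<Longrightarrow> a \<notin> D \<Longrightarrow> ch_cty A N G D (Nu a C)"
| tc_thread: "ch_tty A N G M T \<Longrightarrow> ch_cty A N G {} (Leaf (Thread M))"
| tc_buf: "(\<forall>V\<in>set Vs. ch_vty A N G V A) \<Longrightarrow> ch_cty A N G {a} (Leaf (Buf a Vs))"

inductive ch_tred :: "cht \<Rightarrow> cht \<Rightarrow> bool" where
  ct_lam: "ch_tred (CApp (CLam M) V) (cht_subst 0 V M)"
| ct_rec: "ch_tred (CApp (CRec M) V) (cht_subst 0 (CRec M) (cht_subst 0 (chv_lift 0 V) M))"
| ct_let: "ch_tred (CLet (CReturn V) M) (cht_subst 0 V M)"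
| ct_pair: "ch_tred (CLetPair (CPair V W) M) (cht_subst 0 V (cht_subst 0 (chv_lift 0 W) M))"
| ct_inl: "ch_tred (CCase (CInl V) M N) (cht_subst 0 V M)"
| ct_inr: "ch_tred (CCase (CInr V) M N) (cht_subst 0 V N)"
| ct_roll: "ch_tred (CUnroll (CRoll V)) (CReturn V)"
| ct_ctx: "ch_tred M M' \<Longrightarrow> ch_tred (ch_plug E M) (ch_plug E M')"

inductive ch_red :: "chcfg \<Rightarrow> chcfg \<Rightarrow> bool" where
  cr_give: "ch_red (Par (Leaf (Thread (ch_plug E (CGive W (CName a))))) (Leaf (Buf a Vs)))
                   (Par (Leaf (Thread (ch_plug E (CReturn CUnit)))) (Leaf (Buf a (Vs @ [W]))))"
| cr_take: "ch_red (Par (Leaf (Thread (ch_plug E (CTake (CName a))))) (Leaf (Buf a (W # Vs))))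
                   (Par (Leaf (Thread (ch_plug E (CReturn W)))) (Leaf (Buf a Vs)))"
| cr_fork: "ch_red (Leaf (Thread (ch_plug E (CFork M))))
                   (Par (Leaf (Thread (ch_plug E (CReturn CUnit)))) (Leaf (Thread M)))"
| cr_newch: "a \<notin> cht_fn (ch_plug E CNewCh) \<Longrightarrow>
             ch_red (Leaf (Thread (ch_plug E CNewCh)))
                    (Nu a (Par (Leaf (Thread (ch_plug E (CReturn (CName a))))) (Leaf (Buf a []))))"
| cr_liftm: "ch_tred M M' \<Longrightarrow> ch_red (Leaf (Thread M)) (Leaf (Thread M'))"
| cr_par: "ch_red C C' \<Longrightarrow> ch_red (Par C D) (Par C' D)"
| cr_nu: "ch_red C C' \<Longrightarrow> ch_red (Nu a C) (Nu a C')"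
| cr_struct: "ch_cong C C' \<Longrightarrow> ch_red C' D' \<Longrightarrow> ch_cong D' D \<Longrightarrow> ch_red C D"

section \<open>lambda-act: syntax\<close>

datatype acv = AVar nat | AName name | ALam actm | ARec actm | AUnit | APair acv acv
  | AInl acv | AInr acv | ARoll acv
and actm = AApp acv acv | ALet actm actm | AReturn acv | ALetPair acv actm | ACase acv actm actm
  | AUnroll acv | ASpawn actm | ASend acv acv | AReceive | ASelf

primrec acv_lift :: "nat \<Rightarrow> acv \<Rightarrow> acv" and actm_lift :: "nat \<Rightarrow> actm \<Rightarrow> actm" where
  "acv_lift k (AVar i) = (if i < k then AVar i else AVar (Suc i))"
| "acv_lift k (AName a) = AName a"
| "acv_lift k (ALam M) = ALam (actm_lift (Suc k) M)"
| "acv_lift k (ARec M) = ARec (actm_lift (Suc (Suc k)) M)"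
| "acv_lift k AUnit = AUnit"
| "acv_lift k (APair V W) = APair (acv_lift k V) (acv_lift k W)"
| "acv_lift k (AInl V) = AInl (acv_lift k V)"
| "acv_lift k (AInr V) = AInr (acv_lift k V)"
| "acv_lift k (ARoll V) = ARoll (acv_lift k V)"
| "actm_lift k (AApp V W) = AApp (acv_lift k V) (acv_lift k W)"
| "actm_lift k (ALet M N) = ALet (actm_lift k M) (actm_lift (Suc k) N)"
| "actm_lift k (AReturn V) = AReturn (acv_lift k V)"
| "actm_lift k (ALetPair V M) = ALetPair (acv_lift k V) (actm_lift (Suc (Suc k)) M)"
| "actm_lift k (ACase V M N) = ACase (acv_lift k V) (actm_lift (Suc k) M) (actm_lift (Suc k) N)"
| "actm_lift k (AUnroll V) = AUnroll (acv_lift k V)"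
| "actm_lift k (ASpawn M) = ASpawn (actm_lift k M)"
| "actm_lift k (ASend V W) = ASend (acv_lift k V) (acv_lift k W)"
| "actm_lift k AReceive = AReceive"
| "actm_lift k ASelf = ASelf"

primrec acv_subst :: "nat \<Rightarrow> acv \<Rightarrow> acv \<Rightarrow> acv" and actm_subst :: "nat \<Rightarrow> acv \<Rightarrow> actm \<Rightarrow> actm" where
  "acv_subst k U (AVar i) = (if i < k then AVar i else if i = k then U else AVar (i - 1))"
| "acv_subst k U (AName a) = AName a"
| "acv_subst k U (ALam M) = ALam (actm_subst (Suc k) (acv_lift 0 U) M)"
| "acv_subst k U (ARec M) = ARec (actm_subst (Suc (Suc k)) (acv_lift 0 (acv_lift 0 U)) M)"
| "acv_subst k U AUnit = AUnit"
| "acv_subst k U (APair V W) = APair (acv_subst k U V) (acv_subst k U W)"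
| "acv_subst k U (AInl V) = AInl (acv_subst k U V)"
| "acv_subst k U (AInr V) = AInr (acv_subst k U V)"
| "acv_subst k U (ARoll V) = ARoll (acv_subst k U V)"
| "actm_subst k U (AApp V W) = AApp (acv_subst k U V) (acv_subst k U W)"
| "actm_subst k U (ALet M N) = ALet (actm_subst k U M) (actm_subst (Suc k) (acv_lift 0 U) N)"
| "actm_subst k U (AReturn V) = AReturn (acv_subst k U V)"
| "actm_subst k U (ALetPair V M) =
     ALetPair (acv_subst k U V) (actm_subst (Suc (Suc k)) (acv_lift 0 (acv_lift 0 U)) M)"
| "actm_subst k U (ACase V M N) =
     ACase (acv_subst k U V) (actm_subst (Suc k) (acv_lift 0 U) M) (actm_subst (Suc k) (acv_lift 0 U) N)"
| "actm_subst k U (AUnroll V) = AUnroll (acv_subst k U V)"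
| "actm_subst k U (ASpawn M) = ASpawn (actm_subst k U M)"
| "actm_subst k U (ASend V W) = ASend (acv_subst k U V) (acv_subst k U W)"
| "actm_subst k U AReceive = AReceive"
| "actm_subst k U ASelf = ASelf"

primrec acv_fn :: "acv \<Rightarrow> name set" and actm_fn :: "actm \<Rightarrow> name set" where
  "acv_fn (AVar i) = {}"
| "acv_fn (AName a) = {a}"
| "acv_fn (ALam M) = actm_fn M"
| "acv_fn (ARec M) = actm_fn M"
| "acv_fn AUnit = {}"
| "acv_fn (APair V W) = acv_fn V \<union> acv_fn W"
| "acv_fn (AInl V) = acv_fn V"
| "acv_fn (AInr V) = acv_fn V"
| "acv_fn (ARoll V) = acv_fn V"
| "actm_fn (AApp V W) = acv_fn V \<union> acv_fn W"
| "actm_fn (ALet M N) = actm_fn M \<union> actm_fn N"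
| "actm_fn (AReturn V) = acv_fn V"
| "actm_fn (ALetPair V M) = acv_fn V \<union> actm_fn M"
| "actm_fn (ACase V M N) = acv_fn V \<union> actm_fn M \<union> actm_fn N"
| "actm_fn (AUnroll V) = acv_fn V"
| "actm_fn (ASpawn M) = actm_fn M"
| "actm_fn (ASend V W) = acv_fn V \<union> acv_fn W"
| "actm_fn AReceive = {}"
| "actm_fn ASelf = {}"

primrec acv_swap :: "name \<Rightarrow> name \<Rightarrow> acv \<Rightarrow> acv" and actm_swap :: "name \<Rightarrow> name \<Rightarrow> actm \<Rightarrow> actm" where
  "acv_swap a b (AVar i) = AVar i"
| "acv_swap a b (AName c) = AName (swap_name a b c)"
| "acv_swap a b (ALam M) = ALam (actm_swap a b M)"
| "acv_swap a b (ARec M) = ARec (actm_swap a b M)"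
| "acv_swap a b AUnit = AUnit"
| "acv_swap a b (APair V W) = APair (acv_swap a b V) (acv_swap a b W)"
| "acv_swap a b (AInl V) = AInl (acv_swap a b V)"
| "acv_swap a b (AInr V) = AInr (acv_swap a b V)"
| "acv_swap a b (ARoll V) = ARoll (acv_swap a b V)"
| "actm_swap a b (AApp V W) = AApp (acv_swap a b V) (acv_swap a b W)"
| "actm_swap a b (ALet M N) = ALet (actm_swap a b M) (actm_swap a b N)"
| "actm_swap a b (AReturn V) = AReturn (acv_swap a b V)"
| "actm_swap a b (ALetPair V M) = ALetPair (acv_swap a b V) (actm_swap a b M)"
| "actm_swap a b (ACase V M N) = ACase (acv_swap a b V) (actm_swap a b M) (actm_swap a b N)"
| "actm_swap a b (AUnroll V) = AUnroll (acv_swap a b V)"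
| "actm_swap a b (ASpawn M) = ASpawn (actm_swap a b M)"
| "actm_swap a b (ASend V W) = ASend (acv_swap a b V) (acv_swap a b W)"
| "actm_swap a b AReceive = AReceive"
| "actm_swap a b ASelf = ASelf"

datatype acctx = AHole | AELet acctx actm

primrec ac_plug :: "acctx \<Rightarrow> actm \<Rightarrow> actm" where
  "ac_plug AHole M = M"
| "ac_plug (AELet E N) M = ALet (ac_plug E M) N"

text \<open>Leaves of lambda-act configurations: an actor  < a, M, mailbox >.\<close>
datatype acleaf = Actor name actm "acv list"

primrec acleaf_fn :: "acleaf \<Rightarrow> name set" where
  "acleaf_fn (Actor a M Vs) = insert a (actm_fn M \<union> (\<Union>V\<in>set Vs. acv_fn V))"

primrec acleaf_swap :: "name \<Rightarrow> name \<Rightarrow> acleaf \<Rightarrow> acleaf" where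
  "acleaf_swap a b (Actor c M Vs) = Actor (swap_name a b c) (actm_swap a b M) (map (acv_swap a b) Vs)"

type_synonym accfg = "acleaf cfg"

abbreviation act_cong :: "accfg \<Rightarrow> accfg \<Rightarrow> bool" where
  "act_cong \<equiv> scong acleaf_fn acleaf_swap"

inductive act_tred :: "actm \<Rightarrow> actm \<Rightarrow> bool" where
  at_lam: "act_tred (AApp (ALam M) V) (actm_subst 0 V M)"
| at_rec: "act_tred (AApp (ARec M) V) (actm_subst 0 (ARec M) (actm_subst 0 (acv_lift 0 V) M))"
| at_let: "act_tred (ALet (AReturn V) M) (actm_subst 0 V M)"
| at_pair: "act_tred (ALetPair (APair V W) M) (actm_subst 0 V (actm_subst 0 (acv_lift 0 W) M))"
| at_inl: "act_tred (ACase (AInl V) M N) (actm_subst 0 V M)"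
| at_inr: "act_tred (ACase (AInr V) M N) (actm_subst 0 V N)"
| at_roll: "act_tred (AUnroll (ARoll V)) (AReturn V)"
| at_ctx: "act_tred M M' \<Longrightarrow> act_tred (ac_plug E M) (ac_plug E M')"

inductive act_red :: "accfg \<Rightarrow> accfg \<Rightarrow> bool" where
  ar_spawn: "b \<noteq> a \<Longrightarrow> b \<notin> actm_fn (ac_plug E (ASpawn M)) \<Longrightarrow> b \<notin> (\<Union>V\<in>set Vs. acv_fn V) \<Longrightarrow>
     act_red (Leaf (Actor a (ac_plug E (ASpawn M)) Vs))
             (Nu b (Par (Leaf (Actor a (ac_plug E (AReturn (AName b))) Vs)) (Leaf (Actor b M []))))"
| ar_send: "act_red (Par (Leaf (Actor a (ac_plug E (ASend V' (AName b))) Vs)) (Leaf (Actor b M Ws)))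
                    (Par (Leaf (Actor a (ac_plug E (AReturn AUnit)) Vs)) (Leaf (Actor b M (Ws @ [V']))))"
| ar_send_self: "act_red (Leaf (Actor a (ac_plug E (ASend V' (AName a))) Vs))
                         (Leaf (Actor a (ac_plug E (AReturn AUnit)) (Vs @ [V'])))"
| ar_self: "act_red (Leaf (Actor a (ac_plug E ASelf) Vs))
                    (Leaf (Actor a (ac_plug E (AReturn (AName a))) Vs))"
| ar_receive: "act_red (Leaf (Actor a (ac_plug E AReceive) (W # Vs)))
                       (Leaf (Actor a (ac_plug E (AReturn W)) Vs))"
| ar_liftm: "act_tred M M' \<Longrightarrow> act_red (Leaf (Actor a M Vs)) (Leaf (Actor a M' Vs))"
| ar_par: "act_red C C' \<Longrightarrow> act_red (Par C D) (Par C' D)"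
| ar_nu: "act_red C C' \<Longrightarrow> act_red (Nu a C) (Nu a C')"
| ar_struct: "act_cong C C' \<Longrightarrow> act_red C' D' \<Longrightarrow> act_cong D' D \<Longrightarrow> act_red C D"

section \<open>The translation from lambda-ch into lambda-act\<close>

text \<open>Term-level lists: [] = roll (inl ()),  v :: vs = roll (inr (v, vs)).\<close>
definition a_nil :: acv where "a_nil = ARoll (AInl AUnit)"
definition a_cons :: "acv \<Rightarrow> acv \<Rightarrow> acv" where "a_cons v vs = ARoll (AInr (APair v vs))"

primrec a_list :: "acv list \<Rightarrow> acv" where
  "a_list [] = a_nil"
| "a_list (v # vs) = a_cons v (a_list vs)"

text \<open>List append:
  rec app(p). let (xs, ys) = p in let z <= unroll xs in
    case z { inl u -> return ys ;
             inr c -> let (h, t) = c in let r <= app (t, ys) in return (h :: r) }\<close>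
definition a_append :: acv where
  "a_append = ARec
     (ALetPair (AVar 0)
       (ALet (AUnroll (AVar 1))
         (ACase (AVar 0)
            (AReturn (AVar 2))
            (ALetPair (AVar 0)
               (ALet (AApp (AVar 7) (APair (AVar 0) (AVar 4)))
                  (AReturn (a_cons (AVar 2) (AVar 0))))))))"

text \<open>drain:
  \<lambda>x. let (vals, pids) = x in let u <= unroll vals in
    case u { inl _ -> return (vals, pids) ;
             inr c -> let w <= unroll pids in
               case w { inl _ -> return (vals, pids) ;
                        inr d -> let (v, vs) = c in let (pid, pids') = d in
                                 send v pid; return (vs, pids') } }\<close>
definition a_drain :: acv where
  "a_drain = ALam
     (ALetPair (AVar 0)
       (ALet (AUnroll (AVar 1))
         (ACase (AVar 0)
            (AReturn (APair (AVar 3) (AVar 2)))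
            (ALet (AUnroll (AVar 2))
               (ACase (AVar 0)
                  (AReturn (APair (AVar 5) (AVar 4)))
                  (ALetPair (AVar 2)
                     (ALetPair (AVar 2)
                        (ALet (ASend (AVar 3) (AVar 1))
                           (AReturn (APair (AVar 3) (AVar 1)))))))))))"

text \<open>body:
  rec body(state). let r <= receive in let (vals, pids) = state in
    case r { inl v   -> let vals' <= vals ++ [v] in let st <= drain (vals', pids) in body st ;
             inr pid -> let pids' <= pids ++ [pid] in let st <= drain (vals, pids') in body st }\<close>
definition a_body :: acv where
  "a_body = ARec
     (ALet AReceive
       (ALetPair (AVar 1)
         (ACase (AVar 2)
            (ALet (AApp a_append (APair (AVar 2) (a_cons (AVar 0) a_nil)))
               (ALet (AApp a_drain (APair (AVar 0) (AVar 2)))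
                  (AApp (AVar 7) (AVar 0))))
            (ALet (AApp a_append (APair (AVar 1) (a_cons (AVar 0) a_nil)))
               (ALet (AApp a_drain (APair (AVar 3) (AVar 0)))
                  (AApp (AVar 7) (AVar 0)))))))"

primrec tr_v :: "chv \<Rightarrow> acv" and tr_t :: "cht \<Rightarrow> actm" where
  "tr_v (CVar i) = AVar i"
| "tr_v (CName a) = AName a"
| "tr_v (CLam M) = ALam (tr_t M)"
| "tr_v (CRec M) = ARec (tr_t M)"
| "tr_v CUnit = AUnit"
| "tr_v (CPair V W) = APair (tr_v V) (tr_v W)"
| "tr_v (CInl V) = AInl (tr_v V)"
| "tr_v (CInr V) = AInr (tr_v V)"
| "tr_v (CRoll V) = ARoll (tr_v V)"
| "tr_t (CApp V W) = AApp (tr_v V) (tr_v W)"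
| "tr_t (CLet M N) = ALet (tr_t M) (tr_t N)"
| "tr_t (CReturn V) = AReturn (tr_v V)"
| "tr_t (CLetPair V M) = ALetPair (tr_v V) (tr_t M)"
| "tr_t (CCase V M N) = ACase (tr_v V) (tr_t M) (tr_t N)"
| "tr_t (CUnroll V) = AUnroll (tr_v V)"
| "tr_t (CFork M) = ALet (ASpawn (tr_t M)) (AReturn AUnit)"
| "tr_t (CGive V W) = ASend (AInl (tr_v V)) (tr_v W)"
| "tr_t (CTake V) = ALet ASelf (ALet (ASend (AInr (AVar 0)) (acv_lift 0 (tr_v V))) AReceive)"
| "tr_t CNewCh = ASpawn (AApp a_body (APair a_nil a_nil))"

definition fresh_name :: "name set \<Rightarrow> name" where
  "fresh_name S = (LEAST n. n \<notin> S)"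

fun tr_cfg :: "chcfg \<Rightarrow> accfg" where
  "tr_cfg (Par C D) = Par (tr_cfg C) (tr_cfg D)"
| "tr_cfg (Nu a C) = Nu a (tr_cfg C)"
| "tr_cfg (Leaf (Thread M)) =
     (let b = fresh_name (actm_fn (tr_t M)) in Nu b (Leaf (Actor b (tr_t M) [])))"
| "tr_cfg (Leaf (Buf a Vs)) =
     Leaf (Actor a (AApp a_body (APair (a_list (map tr_v Vs)) a_nil)) [])"

end

theory Submission
  imports Defs
begin

text \<open>Pure steps of a thread are the same steps of
  its actor, since the translation commutes with substitution, and fork and newCh become spawns.
  A give becomes a send of \<open>inl V\<close> to the channel actor, whose loop receives it and appends it to
  its list of values. A take becomes self, a send of \<open>inr pid\<close> and a receive; the channel actor
  appends the pid to its list of waiting pids, and drain at once pairs it with the head value and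
  sends that value back. Hence after every emulated step the channel actor has no waiting pids and
  is again the translation of a buffer. The fresh actor names chosen by the translation of threads
  are matched up to alpha-conversion and scope extrusion.\<close>

lemma act_lift_lift:
  "\<And>k j. k \<le> j \<Longrightarrow> acv_lift (Suc j) (acv_lift k V) = acv_lift k (acv_lift j V)"
  "\<And>k j. k \<le> j \<Longrightarrow> actm_lift (Suc j) (actm_lift k M) = actm_lift k (actm_lift j M)"
  by (induct V and M rule: acv.induct actm.induct) auto

lemma act_subst_lift_cancel:
  "\<And>k U. acv_subst k U (acv_lift k V) = V"
  "\<And>k U. actm_subst k U (actm_lift k M) = M"
  by (induct V and M rule: acv.induct actm.induct) auto

lemma act_subst_lift_commute:
  "\<And>k j U. j \<le> k \<Longrightarrow> acv_subst (Suc k) (acv_lift j U) (acv_lift j V) = acv_lift j (acv_subst k U V)"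
  "\<And>k j U. j \<le> k \<Longrightarrow> actm_subst (Suc k) (acv_lift j U) (actm_lift j M) = actm_lift j (actm_subst k U M)"
  by (induct V and M rule: acv.induct actm.induct) (auto simp: act_lift_lift[of 0, symmetric])

lemma act_fn_lift [simp]:
  "\<And>k. acv_fn (acv_lift k V) = acv_fn V"
  "\<And>k. actm_fn (actm_lift k M) = actm_fn M"
  by (induct V and M rule: acv.induct actm.induct) auto

lemma finite_act_fn [simp]: "finite (acv_fn V)" "finite (actm_fn M)"
  by (induct V and M rule: acv.induct actm.induct) auto

lemma act_swap_lift:
  "\<And>k. acv_swap a b (acv_lift k V) = acv_lift k (acv_swap a b V)"
  "\<And>k. actm_swap a b (actm_lift k M) = actm_lift k (actm_swap a b M)"
  by (induct V and M rule: acv.induct actm.induct) auto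

lemma act_swap_fresh:
  "a \<notin> acv_fn V \<Longrightarrow> b \<notin> acv_fn V \<Longrightarrow> acv_swap a b V = V"
  "a \<notin> actm_fn M \<Longrightarrow> b \<notin> actm_fn M \<Longrightarrow> actm_swap a b M = M"
  by (induct V and M rule: acv.induct actm.induct) (auto simp: swap_name_def)

lemma act_fn_swap:
  "acv_fn (acv_swap a b V) = swap_name a b ` acv_fn V"
  "actm_fn (actm_swap a b M) = swap_name a b ` actm_fn M"
  by (induct V and M rule: acv.induct actm.induct) (auto simp: image_Un)

lemma finite_ch_fn [simp]: "finite (chv_fn V)" "finite (cht_fn M)"
  by (induct V and M rule: chv.induct cht.induct) auto

lemma ch_fn_lift [simp]:
  "\<And>k. chv_fn (chv_lift k V) = chv_fn V"
  "\<And>k. cht_fn (cht_lift k M) = cht_fn M"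
  by (induct V and M rule: chv.induct cht.induct) auto

lemma ch_fn_subst:
  "\<And>k U. chv_fn (chv_subst k U V) \<subseteq> chv_fn U \<union> chv_fn V"
  "\<And>k U. cht_fn (cht_subst k U M) \<subseteq> chv_fn U \<union> cht_fn M"
  by (induct V and M rule: chv.induct cht.induct) (auto, (metis UnE ch_fn_lift(1) subsetD)+)

lemma fresh_name_notin: "finite S \<Longrightarrow> fresh_name S \<notin> S"
  unfolding fresh_name_def by (metis LeastI_ex ex_new_if_finite infinite_UNIV_nat)

lemma obtain_fresh_name:
  assumes "\<And>c :: name. c \<notin> S \<Longrightarrow> thesis" and "finite S"
  shows thesis
  using assms ex_new_if_finite infinite_UNIV_nat by blast

section \<open>The translation commutes with the syntactic operations\<close>

lemmas a_code_defs = a_body_def a_append_def a_drain_def a_nil_def a_cons_def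

lemma tr_lift:
  "\<And>k. tr_v (chv_lift k V) = acv_lift k (tr_v V)"
  "\<And>k. tr_t (cht_lift k M) = actm_lift k (tr_t M)"
  by (induct V and M rule: chv.induct cht.induct) (auto simp: act_lift_lift a_code_defs)

lemma tr_subst:
  "\<And>k U. tr_v (chv_subst k U V) = acv_subst k (tr_v U) (tr_v V)"
  "\<And>k U. tr_t (cht_subst k U M) = actm_subst k (tr_v U) (tr_t M)"
  by (induct V and M rule: chv.induct cht.induct)
    (auto simp: tr_lift act_subst_lift_commute[where j=0, simplified] a_code_defs)

lemma tr_fn:
  "acv_fn (tr_v V) = chv_fn V"
  "actm_fn (tr_t M) = cht_fn M"
  by (induct V and M rule: chv.induct cht.induct) (auto simp: a_code_defs)

lemma tr_swap:
  "tr_v (chv_swap a b V) = acv_swap a b (tr_v V)"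
  "tr_t (cht_swap a b M) = actm_swap a b (tr_t M)"
  by (induct V and M rule: chv.induct cht.induct) (auto simp: act_swap_lift a_code_defs)

primrec chctx_fn :: "chctx \<Rightarrow> name set" where
  "chctx_fn CHole = {}"
| "chctx_fn (CELet E N) = chctx_fn E \<union> cht_fn N"

lemma finite_chctx_fn [simp]: "finite (chctx_fn E)"
  by (induct E) auto

lemma cht_fn_plug [simp]: "cht_fn (ch_plug E M) = chctx_fn E \<union> cht_fn M"
  by (induct E) auto

lemma ch_tred_fn: "ch_tred M M' \<Longrightarrow> cht_fn M' \<subseteq> cht_fn M"
  by (induct rule: ch_tred.induct) (auto dest!: subsetD[OF ch_fn_subst(2)])

primrec acctx_fn :: "acctx \<Rightarrow> name set" where
  "acctx_fn AHole = {}"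
| "acctx_fn (AELet E N) = acctx_fn E \<union> actm_fn N"

lemma actm_fn_plug [simp]: "actm_fn (ac_plug E M) = acctx_fn E \<union> actm_fn M"
  by (induct E) auto

primrec tr_ctx :: "chctx \<Rightarrow> acctx" where
  "tr_ctx CHole = AHole"
| "tr_ctx (CELet E N) = AELet (tr_ctx E) (tr_t N)"

lemma acctx_fn_tr_ctx [simp]: "acctx_fn (tr_ctx E) = chctx_fn E"
  by (induct E) (auto simp: tr_fn)

lemma tr_plug [simp]: "tr_t (ch_plug E M) = ac_plug (tr_ctx E) (tr_t M)"
  by (induct E) auto

lemma tr_tred: "ch_tred M M' \<Longrightarrow> act_tred (tr_t M) (tr_t M')"
  by (induct rule: ch_tred.induct) (auto simp: tr_subst tr_lift intro: act_tred.intros)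

primrec acctx_comp :: "acctx \<Rightarrow> acctx \<Rightarrow> acctx" where
  "acctx_comp AHole F = F"
| "acctx_comp (AELet E N) F = AELet (acctx_comp E F) N"

lemma ac_plug_comp: "ac_plug (acctx_comp E F) M = ac_plug E (ac_plug F M)"
  by (induct E) auto

section \<open>Symbolic evaluation of actor terms\<close>

text \<open>A deterministic interpreter for \<open>act_tred\<close>: \<open>act_eval n\<close> runs at most \<open>n\<close> steps and
  stops at the first stuck term. It lets the simplifier compute the reduction sequences of the
  channel actor.\<close>

fun act_step :: "actm \<Rightarrow> actm option" where
  "act_step (AApp V W) = (case V of ALam M \<Rightarrow> Some (actm_subst 0 W M)
      | ARec M \<Rightarrow> Some (actm_subst 0 (ARec M) (actm_subst 0 (acv_lift 0 W) M)) | _ \<Rightarrow> None)"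
| "act_step (ALet M N) = (case M of AReturn V \<Rightarrow> Some (actm_subst 0 V N)
      | _ \<Rightarrow> map_option (\<lambda>M'. ALet M' N) (act_step M))"
| "act_step (ALetPair V M) = (case V of APair V1 W \<Rightarrow> Some (actm_subst 0 V1 (actm_subst 0 (acv_lift 0 W) M))
      | _ \<Rightarrow> None)"
| "act_step (ACase V M N) = (case V of AInl X \<Rightarrow> Some (actm_subst 0 X M)
      | AInr X \<Rightarrow> Some (actm_subst 0 X N) | _ \<Rightarrow> None)"
| "act_step (AUnroll V) = (case V of ARoll X \<Rightarrow> Some (AReturn X) | _ \<Rightarrow> None)"
| "act_step (AReturn V) = None"
| "act_step (ASpawn M) = None"
| "act_step (ASend V W) = None"
| "act_step AReceive = None"
| "act_step ASelf = None"

lemma act_tred_let: "act_tred M M' \<Longrightarrow> act_tred (ALet M N) (ALet M' N)"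
  using act_tred.at_ctx[of M M' "AELet AHole N"] by simp

lemma act_step_tred: "act_step M = Some M' \<Longrightarrow> act_tred M M'"
proof (induction M arbitrary: M' rule: actm.induct[of "\<lambda>_. True"])
  case (ALet M N)
  show ?case
  proof (cases "\<exists>V. M = AReturn V")
    case True
    with ALet.prems show ?thesis by (auto intro: act_tred.at_let)
  next
    case False
    with ALet.prems obtain M'' where "act_step M = Some M''" "M' = ALet M'' N"
      by (cases M) auto
    with ALet.IH(1) show ?thesis by (simp add: act_tred_let)
  qed
qed (auto intro: act_tred.intros split: acv.splits)

fun act_eval :: "nat \<Rightarrow> actm \<Rightarrow> actm" where
  "act_eval 0 M = M"
| "act_eval (Suc n) M = (case act_step M of None \<Rightarrow> M | Some M' \<Rightarrow> act_eval n M')"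

lemma act_eval_numeral [simp]:
  "act_eval (numeral k) M = (case act_step M of None \<Rightarrow> M | Some M' \<Rightarrow> act_eval (pred_numeral k) M')"
  by (simp add: numeral_eq_Suc)

lemma act_eval_tred: "act_tred\<^sup>*\<^sup>* M (act_eval n M)"
proof (induction n arbitrary: M)
  case (Suc n)
  then show ?case
    by (cases "act_step M") (auto intro: converse_rtranclp_into_rtranclp act_step_tred)
qed simp

lemma act_tred_ctx_rtrancl: "act_tred\<^sup>*\<^sup>* M M' \<Longrightarrow> act_tred\<^sup>*\<^sup>* (ac_plug E M) (ac_plug E M')"
  by (induction rule: rtranclp_induct) (auto intro: rtranclp.rtrancl_into_rtrancl act_tred.at_ctx)

lemma act_tred_let_rtrancl: "act_tred\<^sup>*\<^sup>* M M' \<Longrightarrow> act_tred\<^sup>*\<^sup>* (ALet M N) (ALet M' N)"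
  using act_tred_ctx_rtrancl[of M M' "AELet AHole N"] by simp

lemma act_red_actor_tred: "act_tred\<^sup>*\<^sup>* M M' \<Longrightarrow> act_red\<^sup>*\<^sup>* (Leaf (Actor a M Vs)) (Leaf (Actor a M' Vs))"
  by (induction rule: rtranclp_induct) (auto intro: rtranclp.rtrancl_into_rtrancl act_red.ar_liftm)

lemma act_red_par_rtrancl: "act_red\<^sup>*\<^sup>* C C' \<Longrightarrow> act_red\<^sup>*\<^sup>* (Par C D) (Par C' D)"
  by (induction rule: rtranclp_induct) (auto intro: rtranclp.rtrancl_into_rtrancl act_red.ar_par)

lemma act_red_nu_rtrancl: "act_red\<^sup>*\<^sup>* C C' \<Longrightarrow> act_red\<^sup>*\<^sup>* (Nu a C) (Nu a C')"
  by (induction rule: rtranclp_induct) (auto intro: rtranclp.rtrancl_into_rtrancl act_red.ar_nu)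

fun act_redex :: "actm \<Rightarrow> acctx \<times> actm" where
  "act_redex (ALet M N) = (case act_redex M of (E, R) \<Rightarrow> (AELet E N, R))"
| "act_redex M = (AHole, M)"

lemma ac_plug_act_redex: "ac_plug (fst (act_redex M)) (snd (act_redex M)) = M"
  by (induction M rule: act_redex.induct) (auto split: prod.splits)

lemma actor_eval_steps:
  "act_red\<^sup>*\<^sup>* (Leaf (Actor a (act_eval n M) Vs)) C \<Longrightarrow> act_red\<^sup>*\<^sup>* (Leaf (Actor a M Vs)) C"
  by (metis act_red_actor_tred act_eval_tred rtranclp_trans)

lemma actor_par_eval_steps:
  "act_red\<^sup>*\<^sup>* (Par (Leaf (Actor a (act_eval n M) Vs)) D) C \<Longrightarrow> act_red\<^sup>*\<^sup>* (Par (Leaf (Actor a M Vs)) D) C"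
  by (metis act_red_par_rtrancl act_red_actor_tred act_eval_tred rtranclp_trans)

lemma actor_receive_step:
  "snd (act_redex M) = AReceive \<Longrightarrow>
   act_red\<^sup>*\<^sup>* (Leaf (Actor a (ac_plug (fst (act_redex M)) (AReturn W)) Vs)) C \<Longrightarrow>
   act_red\<^sup>*\<^sup>* (Leaf (Actor a M (W # Vs))) C"
  by (metis ac_plug_act_redex act_red.ar_receive converse_rtranclp_into_rtranclp)

lemma actor_par_receive_step:
  "snd (act_redex M) = AReceive \<Longrightarrow>
   act_red\<^sup>*\<^sup>* (Par (Leaf (Actor a (ac_plug (fst (act_redex M)) (AReturn W)) Vs)) D) C \<Longrightarrow>
   act_red\<^sup>*\<^sup>* (Par (Leaf (Actor a M (W # Vs))) D) C"
  by (metis ac_plug_act_redex act_red.ar_receive act_red.ar_par converse_rtranclp_into_rtranclp)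

lemma actor_par_send_step:
  "snd (act_redex M) = ASend V (AName b) \<Longrightarrow>
   act_red\<^sup>*\<^sup>* (Par (Leaf (Actor a (ac_plug (fst (act_redex M)) (AReturn AUnit)) Vs))
                   (Leaf (Actor b N (Ws @ [V])))) C \<Longrightarrow>
   act_red\<^sup>*\<^sup>* (Par (Leaf (Actor a M Vs)) (Leaf (Actor b N Ws))) C"
  by (metis ac_plug_act_redex act_red.ar_send converse_rtranclp_into_rtranclp)

text \<open>Keeping the shift
  symbolic lets the simplifier push the substitutions of the channel actor's loop through the
  buffered values: a substitution below \<open>n\<close> cancels one shift.\<close>

definition acv_shift :: "nat \<Rightarrow> acv \<Rightarrow> acv" where
  "acv_shift n V = (acv_lift 0 ^^ n) V"

lemma acv_shift_0: "acv_shift 0 V = V"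
  by (simp add: acv_shift_def)

lemma acv_shift_Suc: "acv_shift (Suc n) V = acv_lift 0 (acv_shift n V)"
  by (simp add: acv_shift_def)

lemma acv_lift_shift [simp]: "k \<le> n \<Longrightarrow> acv_lift k (acv_shift n V) = acv_shift (Suc n) V"
proof (induction n arbitrary: k)
  case 0
  then show ?case by (simp add: acv_shift_Suc)
next
  case (Suc n)
  show ?case
  proof (cases k)
    case (Suc k')
    then have "acv_lift k (acv_shift (Suc n) V) = acv_lift 0 (acv_lift k' (acv_shift n V))"
      by (simp add: acv_shift_Suc act_lift_lift)
    then show ?thesis using Suc.IH[of k'] Suc.prems Suc by (simp add: acv_shift_Suc)
  qed (simp add: acv_shift_Suc)
qed

lemma acv_subst_shift [simp]: "j < n \<Longrightarrow> acv_subst j U (acv_shift n V) = acv_shift (n - 1) V"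
proof -
  assume "j < n"
  then obtain m where m: "n = Suc m" "j \<le> m" by (cases n) auto
  then have "acv_shift n V = acv_lift j (acv_shift m V)" by simp
  then show ?thesis using m by (simp only: act_subst_lift_cancel) simp
qed

lemma acv_shift_simps [simp]:
  "acv_shift n (APair V W) = APair (acv_shift n V) (acv_shift n W)"
  "acv_shift n (AInl V) = AInl (acv_shift n V)"
  "acv_shift n (AInr V) = AInr (acv_shift n V)"
  "acv_shift n (ARoll V) = ARoll (acv_shift n V)"
  "acv_shift n AUnit = AUnit"
  "acv_shift n (AName b) = AName b"
  by (induct n) (simp_all add: acv_shift_0 acv_shift_Suc del: acv_lift_shift)

text \<open>The shape of \<open>a_cons\<close> once its definition is unfolded.\<close>
abbreviation a_lcons :: "acv \<Rightarrow> acv \<Rightarrow> acv" where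
  "a_lcons x xs \<equiv> ARoll (AInr (APair x xs))"

lemma a_list_append: "a_list (xs @ ys) = foldr a_lcons xs (a_list ys)"
  by (induct xs) (auto simp: a_cons_def)

lemma a_append_tred:
  "act_tred\<^sup>*\<^sup>* (AApp a_append (APair (acv_shift 0 (a_list xs)) (acv_shift 0 ys)))
                 (AReturn (acv_shift 0 (foldr a_lcons xs ys)))"
proof (induction xs arbitrary: ys)
  case Nil
  show ?case
    by (rule rtranclp_trans[OF act_eval_tred[of _ 5]]) (simp add: a_code_defs)
next
  case (Cons x xs)
  show ?case
    apply (rule rtranclp_trans[OF act_eval_tred[of _ 6]])
    apply (simp add: a_code_defs)
    apply (rule rtranclp_trans[OF act_tred_let_rtrancl[OF Cons.IH[unfolded a_code_defs, simplified]]])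
    apply (rule rtranclp_trans[OF act_eval_tred[of _ 1]])
    apply (simp add: a_code_defs)
    done
qed

lemma actor_a_append_steps:
  "act_red\<^sup>*\<^sup>* (Leaf (Actor a (ALet (AReturn (acv_shift 0 (foldr a_lcons xs V))) N) Vs)) C \<Longrightarrow>
   act_red\<^sup>*\<^sup>* (Leaf (Actor a (ALet (AApp a_append (APair (acv_shift 0 (a_list xs)) V)) N) Vs)) C"
  using a_append_tred[of xs V] act_tred_let_rtrancl act_red_actor_tred rtranclp_trans
  by (metis acv_shift_0)

section \<open>The channel actor\<close>

abbreviation channel_actor :: "name \<Rightarrow> acv list \<Rightarrow> acv list \<Rightarrow> accfg" where
  "channel_actor a vs ms \<equiv> Leaf (Actor a (AApp a_body (APair (a_list vs) a_nil)) ms)"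

lemma channel_actor_give:
  "act_red\<^sup>*\<^sup>* (channel_actor a vs [AInl w]) (channel_actor a (vs @ [w]) [])"
proof -
  have shifted_out: "a_list (vs @ [w]) = acv_shift 0 (foldr a_lcons vs (a_lcons (acv_shift 0 w) (ARoll (AInl AUnit))))"
    by (simp add: a_list_append acv_shift_0 a_code_defs)
  have shifted_in: "channel_actor a vs [AInl w]
      = Leaf (Actor a (AApp a_body (APair (acv_shift 0 (a_list vs)) a_nil)) [AInl (acv_shift 0 w)])"
    by (simp add: acv_shift_0)
  \<comment> \<open>Each step count stops the evaluation right before the next receive, send or call of the loop.\<close>
  show ?thesis
    unfolding shifted_in shifted_out
    apply (rule actor_eval_steps[where n=1])
    apply (simp add: a_code_defs)
    apply (rule actor_receive_step)
     apply simp
    apply (rule actor_eval_steps[where n=3])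
    apply (simp add: a_code_defs)
    apply (rule actor_a_append_steps[unfolded a_code_defs, simplified])
    apply (cases vs)
     apply (rule actor_eval_steps[where n=10], simp add: a_code_defs)+
    done
qed

lemma channel_actor_take:
  "act_red\<^sup>*\<^sup>* (Par (channel_actor a (w # vs) [AInr (AName c)]) (Leaf (Actor c M [])))
                (Par (channel_actor a vs []) (Leaf (Actor c M [w])))"
proof -
  have shifted_in: "channel_actor a (w # vs) [AInr (AName c)]
      = Leaf (Actor a (AApp a_body (APair (acv_shift 0 (a_list (w # vs))) a_nil)) [AInr (AName c)])"
    and shifted_out: "channel_actor a vs [] = Leaf (Actor a (AApp a_body (APair (acv_shift 0 (a_list vs)) a_nil)) [])"
      "[w] = [acv_shift 0 w]"
    by (simp_all add: acv_shift_0)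
  show ?thesis
    unfolding shifted_in shifted_out
    apply (rule actor_par_eval_steps[where n=1])
    apply (simp add: a_code_defs)
    apply (rule actor_par_receive_step)
     apply simp
    \<comment> \<open>drain finds a value and a waiting pid and sends the value to \<open>c\<close>\<close>
    apply (rule actor_par_eval_steps[where n=40])
    apply (simp add: a_code_defs)
    apply (rule actor_par_send_step)
     apply simp
    apply (rule actor_par_eval_steps[where n=2])
    apply (simp add: a_code_defs)
    done
qed

section \<open>Structural congruence and the translation\<close>

declare sc_trans [trans]

lemma act_cong_par: "act_cong C C' \<Longrightarrow> act_cong D D' \<Longrightarrow> act_cong (Par C D) (Par C' D')"
  by (meson sc_comm sc_par sc_trans)

lemma act_cong_extrude_left: "c \<notin> cfg_fn acleaf_fn D \<Longrightarrow> act_cong (Par (Nu c C) D) (Nu c (Par C D))"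
  by (meson sc_comm sc_extr sc_nu sc_trans)

lemma act_cong_actor_alpha:
  assumes "b \<notin> actm_fn M" "c \<notin> actm_fn M"
  shows "act_cong (Nu b (Leaf (Actor b M []))) (Nu c (Leaf (Actor c M [])))"
proof -
  have "act_cong (Nu b (Leaf (Actor b M []))) (Nu c (cfg_swap acleaf_swap b c (Leaf (Actor b M []))))"
    using assms(2) by (intro sc_alpha) simp
  then show ?thesis using assms by (simp add: act_swap_fresh swap_name_def)
qed

lemma tr_thread_cong:
  assumes "b \<notin> cht_fn M"
  shows "act_cong (tr_cfg (Leaf (Thread M))) (Nu b (Leaf (Actor b (tr_t M) [])))"
proof -
  have "fresh_name (actm_fn (tr_t M)) \<notin> actm_fn (tr_t M)"
    by (simp add: fresh_name_notin)
  then show ?thesis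
    using act_cong_actor_alpha assms by (simp add: Let_def tr_fn)
qed

lemma acv_fn_a_list [simp]: "acv_fn (a_list vs) = (\<Union>v\<in>set vs. acv_fn v)"
  by (induct vs) (auto simp: a_code_defs)

lemma acv_fn_a_code [simp]: "acv_fn a_body = {}" "acv_fn a_nil = {}"
  by (simp_all add: a_code_defs)

lemma cfg_fn_tr_cfg: "cfg_fn acleaf_fn (tr_cfg C) = cfg_fn chleaf_fn C"
proof (induction C)
  case (Leaf l)
  show ?case
  proof (cases l)
    case (Thread M)
    then show ?thesis
      using fresh_name_notin[OF finite_act_fn(2), of "tr_t M"] by (auto simp: Let_def tr_fn)
  qed (auto simp: tr_fn)
qed auto

lemma acv_swap_a_list: "acv_swap a b (a_list vs) = a_list (map (acv_swap a b) vs)"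
  by (induct vs) (auto simp: a_code_defs)

lemma tr_cfg_swap:
  "act_cong (tr_cfg (cfg_swap chleaf_swap a b C)) (cfg_swap acleaf_swap a b (tr_cfg C))"
proof (induction C)
  case (Par C D)
  then show ?case by (simp add: act_cong_par)
next
  case (Nu c C)
  then show ?case by (simp add: sc_nu)
next
  case (Leaf l)
  show ?case
  proof (cases l)
    case (Thread M)
    let ?b = "fresh_name (actm_fn (tr_t M))"
    have "?b \<notin> cht_fn M"
      using fresh_name_notin[OF finite_act_fn(2), of "tr_t M"] by (simp add: tr_fn)
    then have "swap_name a b ?b \<notin> cht_fn (cht_swap a b M)"
      by (auto simp: tr_fn[symmetric] tr_swap act_fn_swap swap_name_def)
    from tr_thread_cong[OF this] show ?thesis
      using Thread by (simp add: Let_def tr_swap)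
  next
    case (Buf c Vs)
    then show ?thesis by (simp add: acv_swap_a_list tr_swap a_code_defs sc_refl comp_def)
  qed
qed

lemma tr_cfg_cong: "ch_cong C D \<Longrightarrow> act_cong (tr_cfg C) (tr_cfg D)"
proof (induction rule: scong.induct)
  case (sc_alpha b a C)
  then have "act_cong (Nu a (tr_cfg C)) (Nu b (cfg_swap acleaf_swap a b (tr_cfg C)))"
    by (intro scong.sc_alpha) (simp add: cfg_fn_tr_cfg)
  moreover have "act_cong (Nu b (cfg_swap acleaf_swap a b (tr_cfg C))) (Nu b (tr_cfg (cfg_swap chleaf_swap a b C)))"
    by (rule sc_nu, rule sc_sym, rule tr_cfg_swap)
  ultimately show ?case by (simp only: tr_cfg.simps) (rule sc_trans)
next
  case (sc_sym C D)
  from sc_sym.IH show ?case by (rule scong.sc_sym)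
next
  case (sc_trans C D E)
  from sc_trans.IH show ?case by (rule scong.sc_trans)
next
  case (sc_extr a C D)
  then show ?case by (simp add: scong.sc_extr cfg_fn_tr_cfg)
next
  case (sc_par C D E)
  then show ?case by (simp add: scong.sc_par)
next
  case (sc_nu C D a)
  then show ?case by (simp add: scong.sc_nu)
qed (simp_all add: scong.sc_refl scong.sc_comm scong.sc_assoc scong.sc_nu_comm)

definition act_red_upto :: "accfg \<Rightarrow> accfg \<Rightarrow> bool" where
  "act_red_upto C D \<longleftrightarrow> (\<exists>D'. act_red\<^sup>*\<^sup>* C D' \<and> act_cong D' D)"

lemma act_red_cong_left: "act_cong C C' \<Longrightarrow> act_red C' D \<Longrightarrow> act_red C D"
  using act_red.ar_struct sc_refl by blast

lemma act_red_upto_trans [trans]: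
  assumes "act_red_upto A B" "act_red_upto B C"
  shows "act_red_upto A C"
proof -
  obtain X where AX: "act_red\<^sup>*\<^sup>* A X" and XB: "act_cong X B"
    using assms(1) by (auto simp: act_red_upto_def)
  obtain Y where BY: "act_red\<^sup>*\<^sup>* B Y" and YC: "act_cong Y C"
    using assms(2) by (auto simp: act_red_upto_def)
  have "act_red\<^sup>*\<^sup>* A Y \<or> act_cong X Y"
  proof (cases "B = Y")
    case False
    then obtain Z where "act_red B Z" "act_red\<^sup>*\<^sup>* Z Y"
      using BY by (metis converse_rtranclpE)
    \<comment> \<open>by \<open>ar_struct\<close> the first step from \<open>B\<close> can be taken from \<open>X\<close> instead\<close>
    with AX XB show ?thesis
      by (meson act_red_cong_left converse_rtranclp_into_rtranclp rtranclp_trans)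
  qed (use XB in simp)
  with AX YC show ?thesis
    unfolding act_red_upto_def by (metis sc_trans)
qed

lemma act_cong_imp_red_upto: "act_cong C D \<Longrightarrow> act_red_upto C D"
  unfolding act_red_upto_def by blast

lemma act_red_rtrancl_imp_red_upto: "act_red\<^sup>*\<^sup>* C D \<Longrightarrow> act_red_upto C D"
  unfolding act_red_upto_def using sc_refl by blast

lemma act_red_imp_red_upto: "act_red C D \<Longrightarrow> act_red_upto C D"
  by (intro act_red_rtrancl_imp_red_upto r_into_rtranclp)

lemma act_red_upto_par_left: "act_red_upto C C' \<Longrightarrow> act_red_upto (Par C D) (Par C' D)"
  unfolding act_red_upto_def using act_red_par_rtrancl sc_par by blast

lemma act_red_upto_par_right: "act_red_upto D D' \<Longrightarrow> act_red_upto (Par C D) (Par C D')"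
  by (meson act_cong_imp_red_upto act_red_upto_par_left act_red_upto_trans sc_comm)

lemma act_red_upto_nu: "act_red_upto C C' \<Longrightarrow> act_red_upto (Nu a C) (Nu a C')"
  unfolding act_red_upto_def using act_red_nu_rtrancl sc_nu by blast

section \<open>Simulation\<close>

lemma simulate_tred:
  assumes "ch_tred M M'"
  shows "act_red_upto (tr_cfg (Leaf (Thread M))) (tr_cfg (Leaf (Thread M')))"
proof -
  obtain b where b: "b \<notin> cht_fn M"
    by (rule obtain_fresh_name, assumption) simp
  have "b \<notin> cht_fn M'"
    using b ch_tred_fn[OF assms] by blast
  then have cong_M': "act_cong (Nu b (Leaf (Actor b (tr_t M') []))) (tr_cfg (Leaf (Thread M')))"
    by (rule sc_sym[OF tr_thread_cong])
  have "act_red_upto (tr_cfg (Leaf (Thread M))) (Nu b (Leaf (Actor b (tr_t M) [])))"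
    using b by (intro act_cong_imp_red_upto tr_thread_cong)
  also have "act_red_upto \<dots> (Nu b (Leaf (Actor b (tr_t M') [])))"
    using assms by (intro act_red_imp_red_upto act_red.ar_nu act_red.ar_liftm tr_tred)
  also have "act_red_upto \<dots> (tr_cfg (Leaf (Thread M')))"
    using cong_M' by (rule act_cong_imp_red_upto)
  finally show ?thesis .
qed

lemma tr_thread_par_extrude:
  assumes "b \<notin> cht_fn M" "b \<notin> cfg_fn chleaf_fn D"
  shows "act_cong (tr_cfg (Par (Leaf (Thread M)) D)) (Nu b (Par (Leaf (Actor b (tr_t M) [])) (tr_cfg D)))"
proof -
  have "act_cong (tr_cfg (Par (Leaf (Thread M)) D)) (Par (Nu b (Leaf (Actor b (tr_t M) []))) (tr_cfg D))"
    using tr_thread_cong[OF assms(1)] by (simp add: sc_par)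
  also have "act_cong \<dots> (Nu b (Par (Leaf (Actor b (tr_t M) [])) (tr_cfg D)))"
    using assms(2) by (intro act_cong_extrude_left) (simp add: cfg_fn_tr_cfg)
  finally show ?thesis .
qed

lemma simulate_give:
  "act_red_upto (tr_cfg (Par (Leaf (Thread (ch_plug E (CGive W (CName a))))) (Leaf (Buf a Vs))))
     (tr_cfg (Par (Leaf (Thread (ch_plug E (CReturn CUnit)))) (Leaf (Buf a (Vs @ [W])))))"
proof -
  let ?M = "ch_plug E (CGive W (CName a))" and ?M' = "ch_plug E (CReturn CUnit)"
  obtain c where c: "c \<notin> cht_fn ?M \<union> cfg_fn chleaf_fn (Leaf (Buf a Vs))"
    by (rule obtain_fresh_name, assumption) simp
  have "act_red_upto (tr_cfg (Par (Leaf (Thread ?M)) (Leaf (Buf a Vs))))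
      (Nu c (Par (Leaf (Actor c (tr_t ?M) [])) (tr_cfg (Leaf (Buf a Vs)))))"
    using c by (intro act_cong_imp_red_upto tr_thread_par_extrude) auto
  also have "act_red_upto \<dots> (Nu c (Par (Leaf (Actor c (tr_t ?M') [])) (channel_actor a (map tr_v Vs) [AInl (tr_v W)])))"
    using act_red.ar_send[of c "tr_ctx E" "AInl (tr_v W)" a "[]" "AApp a_body (APair (a_list (map tr_v Vs)) a_nil)" "[]"]
    by (intro act_red_imp_red_upto act_red.ar_nu) simp
  also have "act_red_upto \<dots> (Nu c (Par (Leaf (Actor c (tr_t ?M') [])) (tr_cfg (Leaf (Buf a (Vs @ [W]))))))"
    using channel_actor_give
    by (intro act_red_upto_nu act_red_upto_par_right act_red_rtrancl_imp_red_upto) simp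
  also have "act_red_upto \<dots> (tr_cfg (Par (Leaf (Thread ?M')) (Leaf (Buf a (Vs @ [W])))))"
    using c by (intro act_cong_imp_red_upto sc_sym[OF tr_thread_par_extrude]) auto
  finally show ?thesis .
qed

lemma take_request:
  "act_red\<^sup>*\<^sup>* (Par (Leaf (Actor c (ac_plug E (tr_t (CTake (CName a)))) [])) (Leaf (Actor a B Ws)))
     (Par (Leaf (Actor c (ac_plug E AReceive) [])) (Leaf (Actor a B (Ws @ [AInr (AName c)]))))"
proof -
  let ?K = "ALet (ASend (AInr (AVar 0)) (AName a)) AReceive"
  let ?Y = "Leaf (Actor a B Ws)"
  have "act_red (Leaf (Actor c (ac_plug E (ALet ASelf ?K)) []))
      (Leaf (Actor c (ac_plug E (ALet (AReturn (AName c)) ?K)) []))"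
    using act_red.ar_self[of c "acctx_comp E (AELet AHole ?K)" "[]"] by (simp add: ac_plug_comp)
  moreover have "act_red (Leaf (Actor c (ac_plug E (ALet (AReturn (AName c)) ?K)) []))
      (Leaf (Actor c (ac_plug E (ALet (ASend (AInr (AName c)) (AName a)) AReceive)) []))"
    using act_tred.at_ctx[OF act_tred.at_let[of "AName c" ?K], of E] by (intro act_red.ar_liftm) simp
  moreover have "act_red (Par (Leaf (Actor c (ac_plug E (ALet (ASend (AInr (AName c)) (AName a)) AReceive)) [])) ?Y)
      (Par (Leaf (Actor c (ac_plug E (ALet (AReturn AUnit) AReceive)) [])) (Leaf (Actor a B (Ws @ [AInr (AName c)]))))"
    using act_red.ar_send[of c "acctx_comp E (AELet AHole AReceive)" "AInr (AName c)" a "[]" B Ws]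
    by (simp add: ac_plug_comp)
  moreover have "act_red (Leaf (Actor c (ac_plug E (ALet (AReturn AUnit) AReceive)) []))
      (Leaf (Actor c (ac_plug E AReceive) []))"
    using act_tred.at_ctx[OF act_tred.at_let[of AUnit AReceive], of E] by (intro act_red.ar_liftm) simp
  ultimately show ?thesis
    by (simp del: actm_fn_plug)
      (meson act_red.ar_par converse_rtranclp_into_rtranclp r_into_rtranclp)
qed

lemma simulate_take:
  "act_red_upto (tr_cfg (Par (Leaf (Thread (ch_plug E (CTake (CName a))))) (Leaf (Buf a (W # Vs)))))
     (tr_cfg (Par (Leaf (Thread (ch_plug E (CReturn W)))) (Leaf (Buf a Vs))))"
proof -
  let ?M = "ch_plug E (CTake (CName a))" and ?M' = "ch_plug E (CReturn W)"
  obtain c where c: "c \<notin> cht_fn ?M \<union> cfg_fn chleaf_fn (Leaf (Buf a (W # Vs)))"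
    by (rule obtain_fresh_name, assumption) simp
  let ?R = "Leaf (Actor c (ac_plug (tr_ctx E) AReceive) [])"
  have "act_red_upto (tr_cfg (Par (Leaf (Thread ?M)) (Leaf (Buf a (W # Vs)))))
      (Nu c (Par (Leaf (Actor c (tr_t ?M) [])) (tr_cfg (Leaf (Buf a (W # Vs))))))"
    using c by (intro act_cong_imp_red_upto tr_thread_par_extrude) auto
  also have "act_red_upto \<dots> (Nu c (Par ?R (channel_actor a (map tr_v (W # Vs)) [AInr (AName c)])))"
    using take_request[of c "tr_ctx E" a "AApp a_body (APair (a_list (map tr_v (W # Vs))) a_nil)" "[]"]
    by (intro act_red_upto_nu act_red_rtrancl_imp_red_upto) (simp del: actm_fn_plug)
  also have "act_red_upto \<dots> (Nu c (Par (channel_actor a (map tr_v (W # Vs)) [AInr (AName c)]) ?R))"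
    by (intro act_cong_imp_red_upto sc_nu sc_comm)
  also have "act_red_upto \<dots> (Nu c (Par (channel_actor a (map tr_v Vs) [])
      (Leaf (Actor c (ac_plug (tr_ctx E) AReceive) [tr_v W]))))"
    using channel_actor_take by (intro act_red_upto_nu act_red_rtrancl_imp_red_upto) simp
  also have "act_red_upto \<dots> (Nu c (Par (Leaf (Actor c (ac_plug (tr_ctx E) AReceive) [tr_v W]))
      (channel_actor a (map tr_v Vs) [])))"
    by (intro act_cong_imp_red_upto sc_nu sc_comm)
  also have "act_red_upto \<dots> (Nu c (Par (Leaf (Actor c (tr_t ?M') [])) (tr_cfg (Leaf (Buf a Vs)))))"
    using act_red.ar_par[OF act_red.ar_receive[of c "tr_ctx E" "tr_v W" "[]"]]
    by (intro act_red_imp_red_upto act_red.ar_nu) simp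
  also have "act_red_upto \<dots> (tr_cfg (Par (Leaf (Thread ?M')) (Leaf (Buf a Vs))))"
    using c by (intro act_cong_imp_red_upto sc_sym[OF tr_thread_par_extrude]) auto
  finally show ?thesis .
qed

lemma simulate_fork:
  "act_red_upto (tr_cfg (Leaf (Thread (ch_plug E (CFork M)))))
     (tr_cfg (Par (Leaf (Thread (ch_plug E (CReturn CUnit)))) (Leaf (Thread M))))"
proof -
  let ?M = "ch_plug E (CFork M)" and ?M' = "ch_plug E (CReturn CUnit)"
  obtain b where b: "b \<notin> cht_fn ?M"
    by (rule obtain_fresh_name, assumption) simp
  obtain c where c: "c \<notin> insert b (cht_fn ?M)"
    by (rule obtain_fresh_name, assumption) simp
  let ?X = "Leaf (Actor b (tr_t ?M') [])" and ?Y = "Leaf (Actor c (tr_t M) [])"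
  have "act_red_upto (tr_cfg (Leaf (Thread ?M))) (Nu b (Leaf (Actor b (tr_t ?M) [])))"
    using b by (intro act_cong_imp_red_upto tr_thread_cong)
  also have "act_red_upto \<dots> (Nu b (Nu c (Par
      (Leaf (Actor b (ac_plug (tr_ctx E) (ALet (AReturn (AName c)) (AReturn AUnit))) [])) ?Y)))"
    using act_red.ar_spawn[of c b "acctx_comp (tr_ctx E) (AELet AHole (AReturn AUnit))" "tr_t M" "[]"] c
    by (intro act_red_imp_red_upto act_red.ar_nu) (auto simp: ac_plug_comp tr_fn)
  also have "act_red_upto \<dots> (Nu b (Nu c (Par ?X ?Y)))"
    using act_tred.at_ctx[OF act_tred.at_let[of "AName c" "AReturn AUnit"], of "tr_ctx E"]
    by (intro act_red_imp_red_upto act_red.ar_nu act_red.ar_par act_red.ar_liftm) simp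
  also have "act_red_upto \<dots> (Nu b (Par ?X (Nu c ?Y)))"
    using c by (intro act_cong_imp_red_upto sc_nu sc_sym[OF sc_extr]) (auto simp: tr_fn)
  also have "act_red_upto \<dots> (Nu b (Par ?X (tr_cfg (Leaf (Thread M)))))"
    using c by (intro act_cong_imp_red_upto sc_nu act_cong_par sc_refl sc_sym[OF tr_thread_cong]) auto
  also have "act_red_upto \<dots> (tr_cfg (Par (Leaf (Thread ?M')) (Leaf (Thread M))))"
    using b by (intro act_cong_imp_red_upto sc_sym[OF tr_thread_par_extrude]) auto
  finally show ?thesis .
qed

lemma simulate_newch:
  assumes "a \<notin> cht_fn (ch_plug E CNewCh)"
  shows "act_red_upto (tr_cfg (Leaf (Thread (ch_plug E CNewCh))))
     (tr_cfg (Nu a (Par (Leaf (Thread (ch_plug E (CReturn (CName a))))) (Leaf (Buf a [])))))"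
proof -
  let ?M = "ch_plug E CNewCh" and ?M' = "ch_plug E (CReturn (CName a))"
  obtain b where b: "b \<notin> insert a (cht_fn ?M)"
    by (rule obtain_fresh_name, assumption) simp
  have "act_red_upto (tr_cfg (Leaf (Thread ?M))) (Nu b (Leaf (Actor b (tr_t ?M) [])))"
    using b by (intro act_cong_imp_red_upto tr_thread_cong) auto
  also have "act_red_upto \<dots> (Nu b (Nu a (Par (Leaf (Actor b (tr_t ?M') [])) (tr_cfg (Leaf (Buf a []))))))"
    using act_red.ar_spawn[of a b "tr_ctx E" "AApp a_body (APair a_nil a_nil)" "[]"] assms b
    by (intro act_red_imp_red_upto act_red.ar_nu) (auto simp: tr_fn)
  also have "act_red_upto \<dots> (Nu a (Nu b (Par (Leaf (Actor b (tr_t ?M') [])) (tr_cfg (Leaf (Buf a []))))))"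
    by (intro act_cong_imp_red_upto sc_nu_comm)
  also have "act_red_upto \<dots> (tr_cfg (Nu a (Par (Leaf (Thread ?M')) (Leaf (Buf a [])))))"
    unfolding tr_cfg.simps(2) using b
    by (intro act_cong_imp_red_upto sc_nu sc_sym[OF tr_thread_par_extrude]) auto
  finally show ?thesis .
qed

lemma tr_cfg_simulation: "ch_red C1 C2 \<Longrightarrow> act_red_upto (tr_cfg C1) (tr_cfg C2)"
proof (induction rule: ch_red.induct)
  case (cr_give E W a Vs)
  show ?case by (rule simulate_give)
next
  case (cr_take E a W Vs)
  show ?case by (rule simulate_take)
next
  case (cr_fork E M)
  show ?case by (rule simulate_fork)
next
  case (cr_newch a E)
  then show ?case by (rule simulate_newch)
next
  case (cr_liftm M M')
  then show ?case by (rule simulate_tred)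
next
  case (cr_par C C' D)
  then show ?case by (simp add: act_red_upto_par_left)
next
  case (cr_nu C C' a)
  then show ?case by (simp add: act_red_upto_nu)
next
  case (cr_struct C C' D' D)
  have "act_red_upto (tr_cfg C) (tr_cfg C')"
    using cr_struct.hyps(1) by (intro act_cong_imp_red_upto tr_cfg_cong)
  also have "act_red_upto \<dots> (tr_cfg D')"
    by (fact cr_struct.IH)
  also have "act_red_upto \<dots> (tr_cfg D)"
    using cr_struct.hyps(3) by (intro act_cong_imp_red_upto tr_cfg_cong)
  finally show ?case .
qed

theorem theorem27:
  assumes "ch_cty A N G Delta C1"
    and "ch_red C1 C2"
  shows "\<exists>D. act_red\<^sup>*\<^sup>* (tr_cfg C1) D \<and> act_cong D (tr_cfg C2)"
  using tr_cfg_simulation[OF assms(2)] unfolding act_red_upto_def .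

end
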